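(* Let $f:\mathbb{R}^d\to\mathbb{R}$ be $L$-smooth (i.e. $\|\nabla f(\mathbf{x})-\nabla f(\mathbf{y})\|\le L\|\mathbf{x}-\mathbf{y}\|$ for all $\mathbf{x},\mathbf{y}$) with $f_*=\inf_{\mathbf{x}} f(\mathbf{x})>-\infty$. Let $T\ge1$, $\eta>0$, $0\le\lambda\le\frac{1}{2\eta T}$, let $\mathbf{x}_1$ satisfy $\|\mathbf{x}_1\|_\infty\le\eta$ and $f(\mathbf{x}_1)-f_*\le\Delta_f$, and let $\mathbf{v}_1,\dots,\mathbf{v}_T$ be arbitrary (possibly random) vectors in $\mathbb{R}^d$. Define $\mathbf{x}_{t+1}=\mathbf{x}_t-\eta(\operatorname{sign}(\mathbf{v}_t)+\lambda\mathbf{x}_t)$ for $t=1,\dots,T$. Then $$\mathbb{E}\left[\frac1T\sum_{t=1}^T\|\nabla f(\mathbf{x}_t)\|_1\right]\le \frac{2\Delta_f}{\eta T}+4\sqrt d\,\sqrt{\mathbb{E}\left[\frac1T\sum_{t=1}^T\|\nabla f(\mathbf{x}_t)-\mathbf{v}_t\|^2\right]}+4\eta L d .$$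
   Context: $\|\cdot\|$ is the Euclidean norm, $\|\cdot\|_1$ and $\|\cdot\|_\infty$ the $\ell_1$- and max-norms. $\operatorname{sign}$ is applied coordinatewise with values in $\{-1,0,1\}$. *)

theory Defs
  imports "HOL-Analysis.Analysis" "HOL-Probability.Probability"
begin

definition vsign :: "real ^ 'n \<Rightarrow> real ^ 'n" where
  "vsign v = (\<chi> i. sgn (v $ i))"

definition norm1 :: "real ^ 'n \<Rightarrow> real" where
  "norm1 v = (\<Sum>i\<in>UNIV. \<bar>v $ i\<bar>)"

definition norm_inf :: "real ^ 'n \<Rightarrow> real" where
  "norm_inf v = Max (range (\<lambda>i. \<bar>v $ i\<bar>))"

end

theory Submission
  imports Defs
begin

(* By L-smoothness, a step x - eta s lowers f by at least eta <grad f x, s> - L eta^2 |s|^2 / 2.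
   Weight decay keeps every coordinate of the t-th iterate below t eta <= 1 / (2 lam) in absolute
   value, so s = sign v + lam x has coordinates of size at most 3/2, and
   <grad f x, s> >= |grad f x|_1 / 2 - 2 |grad f x - v|_1.  Telescoping over t, together with
   |.|_1 <= sqrt d |.| and mean <= root mean square, gives the bound for every realisation of the
   noise; the expectation then moves under the square root since E (sqrt Z) <= sqrt (E Z). *)

lemma lipschitz_gradient_upper_bound:
  fixes f :: "'a::real_inner \<Rightarrow> real" and grad :: "'a \<Rightarrow> 'a"
  assumes grad: "\<And>y. (f has_derivative (\<lambda>h. grad y \<bullet> h)) (at y)"
    and smooth: "\<And>y z. norm (grad y - grad z) \<le> L * norm (y - z)"
  shows "f y \<le> f x + grad x \<bullet> (y - x) + L / 2 * (norm (y - x))\<^sup>2"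
proof -
  define h where "h = y - x"
  define \<psi> where "\<psi> s = f (x + s *\<^sub>R h) - s * (grad x \<bullet> h) - L / 2 * s\<^sup>2 * (norm h)\<^sup>2" for s
  have \<psi>_deriv: "(\<psi> has_real_derivative ((grad (x + s *\<^sub>R h) - grad x) \<bullet> h - L * s * (norm h)\<^sup>2)) (at s)"
    for s
  proof -
    have "((\<lambda>s. f (x + s *\<^sub>R h)) has_derivative (\<lambda>u. grad (x + s *\<^sub>R h) \<bullet> (u *\<^sub>R h))) (at s)"
      by (rule has_derivative_compose[OF _ grad]) (auto intro!: derivative_eq_intros)
    then have f_line: "((\<lambda>s. f (x + s *\<^sub>R h)) has_real_derivative (grad (x + s *\<^sub>R h) \<bullet> h)) (at s)"
      by (simp add: has_field_derivative_def mult.commute[of _ "grad (x + s *\<^sub>R h) \<bullet> h"])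
    show ?thesis unfolding \<psi>_def
      by (rule derivative_eq_intros f_line refl | simp)+ (simp add: algebra_simps)
  qed
  obtain z where z: "0 < z" "z < 1"
    and mvt: "\<psi> 1 - \<psi> 0 = (grad (x + z *\<^sub>R h) - grad x) \<bullet> h - L * z * (norm h)\<^sup>2"
    using MVT2[of 0 1 \<psi> "\<lambda>s. (grad (x + s *\<^sub>R h) - grad x) \<bullet> h - L * s * (norm h)\<^sup>2"] \<psi>_deriv
    by auto
  have "(grad (x + z *\<^sub>R h) - grad x) \<bullet> h \<le> norm (grad (x + z *\<^sub>R h) - grad x) * norm h"
    by (rule norm_cauchy_schwarz)
  also have "\<dots> \<le> L * norm (z *\<^sub>R h) * norm h"
    using smooth[of "x + z *\<^sub>R h" x] by (intro mult_right_mono) auto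
  also have "\<dots> = L * z * (norm h)\<^sup>2"
    using z by (simp add: power2_eq_square)
  finally have "\<psi> 1 \<le> \<psi> 0"
    using mvt by simp
  then show ?thesis
    unfolding \<psi>_def h_def by simp
qed

lemma lipschitz_constant_nonneg:
  fixes g :: "'a::euclidean_space \<Rightarrow> 'b::real_normed_vector"
  assumes "\<And>y z. norm (g y - g z) \<le> L * norm (y - z)"
  shows "0 \<le> L"
proof -
  obtain b :: 'a where b: "b \<in> Basis"
    using nonempty_Basis by blast
  have "0 \<le> L * norm (b - 0)"
    using assms[of b 0] norm_ge_zero[of "g b - g 0"] by linarith
  then show ?thesis
    using b by (simp add: zero_le_mult_iff nonzero_Basis)
qed

(* sgn w can disagree with the sign of g only where the error |g - w| is at least |g|. *)
lemma sgn_mult_ge_abs_sub: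
  fixes g w :: real
  shows "\<bar>g\<bar> - 2 * \<bar>g - w\<bar> \<le> g * sgn w"
  by (cases "w > 0"; cases "w < 0"; cases "g \<ge> 0") (auto simp: sgn_if abs_if)

lemma norm_le_sqrt_card_if_components_le:
  fixes u :: "real ^ 'n"
  assumes "\<And>i. \<bar>u $ i\<bar> \<le> c"
  shows "norm u \<le> sqrt (real CARD('n)) * c"
proof -
  have c: "0 \<le> c"
    using assms[of undefined] by linarith
  have "(norm u)\<^sup>2 = (\<Sum>i\<in>UNIV. (u $ i)\<^sup>2)"
    unfolding power2_norm_eq_inner inner_vec_def by (simp add: power2_eq_square)
  also have "\<dots> \<le> (\<Sum>i\<in>(UNIV::'n set). c\<^sup>2)"
    using assms c by (intro sum_mono) (simp add: power2_le_iff_abs_le)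
  also have "\<dots> = (sqrt (real CARD('n)) * c)\<^sup>2"
    by (simp add: power_mult_distrib)
  finally show ?thesis
    by (rule power2_le_imp_le) (simp add: c)
qed

lemma norm1_le_sqrt_card_mult_norm: "norm1 (e :: real ^ 'n) \<le> sqrt (real CARD('n)) * norm e"
proof -
  have "norm1 e = e \<bullet> vsign e"
    unfolding norm1_def vsign_def inner_vec_def by (auto intro!: sum.cong simp: abs_sgn)
  also have "\<dots> \<le> norm e * norm (vsign e)"
    by (rule norm_cauchy_schwarz)
  also have "\<dots> \<le> norm e * (sqrt (real CARD('n)) * 1)"
    by (intro mult_left_mono norm_le_sqrt_card_if_components_le) (auto simp: vsign_def sgn_if)
  finally show ?thesis
    by (simp add: mult.commute)
qed

lemma mean_le_sqrt_mean_squares: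
  fixes a :: "'i \<Rightarrow> real"
  shows "(1 / real (card A)) * (\<Sum>i\<in>A. a i) \<le> sqrt ((1 / real (card A)) * (\<Sum>i\<in>A. (a i)\<^sup>2))"
proof (cases "finite A \<and> A \<noteq> {}")
  case True
  then have n: "real (card A) > 0"
    by (simp add: card_gt_0_iff)
  show ?thesis
  proof (rule real_le_rsqrt)
    have "((1 / real (card A)) * (\<Sum>i\<in>A. a i))\<^sup>2 = (\<Sum>i\<in>A. a i)\<^sup>2 / (real (card A))\<^sup>2"
      by (simp add: power_divide)
    also have "\<dots> \<le> (\<Sum>i\<in>A. (a i)\<^sup>2) * real (card A) / (real (card A))\<^sup>2"
      using sum_squared_le_sum_of_squares[of a A] True by (intro divide_right_mono) auto
    also have "\<dots> = (1 / real (card A)) * (\<Sum>i\<in>A. (a i)\<^sup>2)"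
      using n by (simp add: power2_eq_square)
    finally show "((1 / real (card A)) * (\<Sum>i\<in>A. a i))\<^sup>2 \<le> \<dots>" .
  qed
qed auto

lemma (in prob_space) expectation_sqrt_le_sqrt_expectation:
  fixes Z :: "'a \<Rightarrow> real"
  assumes Z: "integrable M Z" and Z_nonneg: "AE \<omega> in M. 0 \<le> Z \<omega>"
  shows "integrable M (\<lambda>\<omega>. sqrt (Z \<omega>))" and "expectation (\<lambda>\<omega>. sqrt (Z \<omega>)) \<le> sqrt (expectation Z)"
proof -
  have Z_meas [measurable]: "Z \<in> borel_measurable M"
    using Z by simp
  have sq: "integrable M (\<lambda>\<omega>. (sqrt (Z \<omega>))\<^sup>2)"
    using Z by (rule integrable_cong_AE_imp) (use Z_nonneg in \<open>auto elim!: eventually_mono\<close>)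
  have sqrt_meas: "(\<lambda>\<omega>. sqrt (Z \<omega>)) \<in> borel_measurable M"
    by measurable
  show int: "integrable M (\<lambda>\<omega>. sqrt (Z \<omega>))"
    using sqrt_meas sq by (rule square_integrable_imp_integrable)
  have "(expectation (\<lambda>\<omega>. sqrt (Z \<omega>)))\<^sup>2 \<le> expectation (\<lambda>\<omega>. (sqrt (Z \<omega>))\<^sup>2)"
    using variance_positive[of "\<lambda>\<omega>. sqrt (Z \<omega>)"] variance_eq[OF int sq] by linarith
  also have "\<dots> = expectation Z"
    by (rule integral_cong_AE) (use Z_nonneg in \<open>auto elim!: eventually_mono\<close>)
  finally show "expectation (\<lambda>\<omega>. sqrt (Z \<omega>)) \<le> sqrt (expectation Z)"
    by (rule real_le_rsqrt)
qed

lemma sign_step_descent: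
  fixes f :: "real ^ 'n \<Rightarrow> real" and grad :: "real ^ 'n \<Rightarrow> real ^ 'n"
  assumes grad: "\<And>y. (f has_derivative (\<lambda>h. grad y \<bullet> h)) (at y)"
    and smooth: "\<And>y z. norm (grad y - grad z) \<le> L * norm (y - z)"
    and lam: "0 \<le> lam" and eta: "0 \<le> \<eta>"
    and decay_small: "\<And>i. lam * \<bar>x $ i\<bar> \<le> 1/2"
  shows "f (x - \<eta> *\<^sub>R (vsign w + lam *\<^sub>R x))
           \<le> f x - \<eta> / 2 * norm1 (grad x) + 2 * \<eta> * norm1 (grad x - w)
             + 9/8 * L * \<eta>\<^sup>2 * real CARD('n)"
proof -
  define g where "g = grad x"
  define s where "s = vsign w + lam *\<^sub>R x"
  have s_i: "s $ i = sgn (w $ i) + lam * x $ i" for i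
    by (simp add: s_def vsign_def)
  have decay_term: "\<bar>g $ i * (lam * x $ i)\<bar> \<le> \<bar>g $ i\<bar> / 2" for i
    using mult_left_mono[OF decay_small[of i], of "\<bar>g $ i\<bar>"] lam by (simp add: abs_mult)
  have "(\<Sum>i\<in>UNIV. \<bar>g $ i\<bar> / 2 - 2 * \<bar>g $ i - w $ i\<bar>) \<le> (\<Sum>i\<in>UNIV. g $ i * s $ i)"
  proof (rule sum_mono)
    fix i
    show "\<bar>g $ i\<bar> / 2 - 2 * \<bar>g $ i - w $ i\<bar> \<le> g $ i * s $ i"
      using sgn_mult_ge_abs_sub[of "g $ i" "w $ i"] decay_term[of i] by (simp add: s_i algebra_simps)
  qed
  then have descent_dir: "norm1 g / 2 - 2 * norm1 (g - w) \<le> g \<bullet> s"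
    by (simp add: norm1_def inner_vec_def sum_subtractf sum_divide_distrib sum_distrib_left)
  have norm_s: "norm s \<le> sqrt (real CARD('n)) * (3/2)"
  proof (rule norm_le_sqrt_card_if_components_le)
    fix i
    have "\<bar>s $ i\<bar> \<le> \<bar>sgn (w $ i)\<bar> + lam * \<bar>x $ i\<bar>"
      using abs_triangle_ineq[of "sgn (w $ i)" "lam * x $ i"] lam by (simp add: s_i abs_mult)
    moreover have "\<bar>sgn (w $ i)\<bar> \<le> 1"
      by (simp add: abs_sgn_eq)
    ultimately show "\<bar>s $ i\<bar> \<le> 3/2"
      using decay_small[of i] by linarith
  qed
  have "(norm s)\<^sup>2 \<le> (sqrt (real CARD('n)) * (3/2))\<^sup>2"
    by (rule power_mono[OF norm_s norm_ge_zero])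
  also have "\<dots> = 9/4 * real CARD('n)"
    by (simp add: power_mult_distrib power_divide)
  finally have step_size: "(norm s)\<^sup>2 \<le> 9/4 * real CARD('n)" .
  have "f (x - \<eta> *\<^sub>R s) \<le> f x - \<eta> * (g \<bullet> s) + L / 2 * (\<eta>\<^sup>2 * (norm s)\<^sup>2)"
    using lipschitz_gradient_upper_bound[OF grad smooth, of "x - \<eta> *\<^sub>R s" x] eta
    by (simp add: g_def power_mult_distrib)
  also have "\<dots> \<le> f x - \<eta> * (norm1 g / 2 - 2 * norm1 (g - w)) + L / 2 * (\<eta>\<^sup>2 * (9/4 * real CARD('n)))"
    using descent_dir step_size eta lipschitz_constant_nonneg[OF smooth]
    by (intro add_mono diff_mono mult_left_mono) auto
  finally show ?thesis
    by (simp add: s_def g_def algebra_simps)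
qed

lemma weight_decay_sign_iterates_abs_le:
  fixes x v :: "nat \<Rightarrow> real ^ 'n"
  assumes lam: "0 \<le> lam" and eta: "0 \<le> \<eta>" "\<eta> * lam \<le> 1"
    and x1: "norm_inf (x 1) \<le> \<eta>"
    and x_step: "\<And>t. 1 \<le> t \<Longrightarrow> t \<le> T \<Longrightarrow> x (Suc t) = x t - \<eta> *\<^sub>R (vsign (v t) + lam *\<^sub>R x t)"
    and t: "1 \<le> t" "t \<le> Suc T"
  shows "\<bar>x t $ i\<bar> \<le> real t * \<eta>"
  using t
proof (induction t rule: dec_induct)
  case base
  have "\<bar>x 1 $ i\<bar> \<le> norm_inf (x 1)"
    unfolding norm_inf_def by (rule Max_ge) auto
  with x1 show ?case
    by simp
next
  case (step s)
  have "x (Suc s) $ i = (x s - \<eta> *\<^sub>R (vsign (v s) + lam *\<^sub>R x s)) $ i"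
    using step.hyps step.prems x_step[of s] by simp
  also have "\<dots> = (1 - \<eta> * lam) * x s $ i - \<eta> * sgn (v s $ i)"
    by (simp add: vsign_def algebra_simps)
  also have "\<bar>\<dots>\<bar> \<le> (1 - \<eta> * lam) * \<bar>x s $ i\<bar> + \<eta> * \<bar>sgn (v s $ i)\<bar>"
    using eta abs_triangle_ineq4[of "(1 - \<eta> * lam) * x s $ i" "\<eta> * sgn (v s $ i)"]
    by (simp add: abs_mult)
  also have "\<dots> \<le> 1 * (real s * \<eta>) + \<eta> * 1"
    using step eta lam by (intro add_mono mult_mono) (auto simp: sgn_if)
  finally show ?case
    by (simp add: algebra_simps)
qed

context
  fixes f :: "real ^ 'n \<Rightarrow> real" and grad :: "real ^ 'n \<Rightarrow> real ^ 'n"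
    and L \<eta> lam \<Delta> :: real and T :: nat and x v :: "nat \<Rightarrow> real ^ 'n"
  assumes grad: "\<And>y. (f has_derivative (\<lambda>h. grad y \<bullet> h)) (at y)"
    and smooth: "\<And>y z. norm (grad y - grad z) \<le> L * norm (y - z)"
    and bdd: "bdd_below (range f)"
    and T: "T \<ge> 1"
    and eta: "\<eta> > 0"
    and lam: "0 \<le> lam" "lam \<le> 1 / (2 * \<eta> * real T)"
    and x1_inf: "norm_inf (x 1) \<le> \<eta>"
    and x1_gap: "f (x 1) - (INF y. f y) \<le> \<Delta>"
    and x_step: "\<And>t. 1 \<le> t \<Longrightarrow> t \<le> T \<Longrightarrow> x (Suc t) = x t - \<eta> *\<^sub>R (vsign (v t) + lam *\<^sub>R x t)"
begin

lemma signSGD_decay_term_le_half: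
  assumes t: "t \<in> {1..T}"
  shows "lam * \<bar>x t $ i\<bar> \<le> 1/2"
proof -
  have decay_T: "\<eta> * lam * real T \<le> 1/2"
    using lam(2) eta T by (simp add: field_simps)
  moreover have "\<eta> * lam * 1 \<le> \<eta> * lam * real T"
    using T eta lam(1) by (intro mult_left_mono) auto
  ultimately have "\<eta> * lam \<le> 1"
    by linarith
  then have "\<bar>x t $ i\<bar> \<le> real t * \<eta>"
    using weight_decay_sign_iterates_abs_le[OF lam(1) _ _ x1_inf x_step] eta t by auto
  also have "\<dots> \<le> real T * \<eta>"
    using t eta by (intro mult_right_mono) auto
  finally have "lam * \<bar>x t $ i\<bar> \<le> lam * (real T * \<eta>)"
    using lam(1) by (rule mult_left_mono)
  with decay_T show ?thesis
    by (simp add: algebra_simps)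
qed

lemma signSGD_step_descent:
  assumes t: "t \<in> {1..T}"
  shows "\<eta> / 2 * norm1 (grad (x t))
           \<le> f (x t) - f (x (Suc t)) + 2 * \<eta> * sqrt (real CARD('n)) * norm (grad (x t) - v t)
             + 9/8 * L * \<eta>\<^sup>2 * real CARD('n)"
proof -
  have "f (x (Suc t)) \<le> f (x t) - \<eta> / 2 * norm1 (grad (x t)) + 2 * \<eta> * norm1 (grad (x t) - v t)
          + 9/8 * L * \<eta>\<^sup>2 * real CARD('n)"
    using sign_step_descent[OF grad smooth lam(1) _ signSGD_decay_term_le_half[OF t]] x_step t eta
    by auto
  moreover have "2 * \<eta> * norm1 (grad (x t) - v t) \<le> 2 * \<eta> * (sqrt (real CARD('n)) * norm (grad (x t) - v t))"
    using norm1_le_sqrt_card_mult_norm eta by (intro mult_left_mono) auto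
  ultimately show ?thesis
    by (simp add: algebra_simps)
qed

lemma signSGD_telescoped:
  "\<eta> / 2 * (\<Sum>t=1..T. norm1 (grad (x t)))
     \<le> \<Delta> + 2 * \<eta> * sqrt (real CARD('n)) * (\<Sum>t=1..T. norm (grad (x t) - v t))
       + real T * (9/8 * L * \<eta>\<^sup>2 * real CARD('n))"
proof -
  have "\<eta> / 2 * (\<Sum>t=1..T. norm1 (grad (x t)))
        \<le> (\<Sum>t=1..T. f (x t) - f (x (Suc t))
             + 2 * \<eta> * sqrt (real CARD('n)) * norm (grad (x t) - v t)
             + 9/8 * L * \<eta>\<^sup>2 * real CARD('n))"
    unfolding sum_distrib_left by (intro sum_mono signSGD_step_descent)
  also have "\<dots> = f (x 1) - f (x (Suc T))
                 + 2 * \<eta> * sqrt (real CARD('n)) * (\<Sum>t=1..T. norm (grad (x t) - v t))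
                 + real T * (9/8 * L * \<eta>\<^sup>2 * real CARD('n))"
    using sum_Suc_diff[of 1 T "\<lambda>t. - f (x t)"] T by (simp add: sum.distrib sum_distrib_left)
  also have "f (x 1) - f (x (Suc T)) \<le> \<Delta>"
    using x1_gap cINF_lower[OF bdd, of "x (Suc T)"] by simp
  finally show ?thesis
    by simp
qed

lemma signSGD_pathwise_bound:
  "(1 / real T) * (\<Sum>t=1..T. norm1 (grad (x t)))
     \<le> 2 * \<Delta> / (\<eta> * real T)
       + 4 * sqrt (real CARD('n)) * sqrt ((1 / real T) * (\<Sum>t=1..T. (norm (grad (x t) - v t))\<^sup>2))
       + 4 * \<eta> * L * real CARD('n)"
proof -
  define d where "d = real CARD('n)"
  have T_pos: "real T > 0"
    using T by simp
  have "(1 / real T) * (\<Sum>t=1..T. norm1 (grad (x t)))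
        = 2 / (\<eta> * real T) * (\<eta> / 2 * (\<Sum>t=1..T. norm1 (grad (x t))))"
    using eta T_pos by (simp add: field_simps)
  also have "\<dots> \<le> 2 / (\<eta> * real T) * (\<Delta> + 2 * \<eta> * sqrt d * (\<Sum>t=1..T. norm (grad (x t) - v t))
                                          + real T * (9/8 * L * \<eta>\<^sup>2 * d))"
    using signSGD_telescoped eta T_pos unfolding d_def by (intro mult_left_mono) auto
  also have "\<dots> = 2 * \<Delta> / (\<eta> * real T)
                 + 4 * sqrt d * ((1 / real T) * (\<Sum>t=1..T. norm (grad (x t) - v t)))
                 + 9/4 * \<eta> * L * d"
    using eta T_pos by (simp add: field_simps power2_eq_square)
  also have "(1 / real T) * (\<Sum>t=1..T. norm (grad (x t) - v t))
             \<le> sqrt ((1 / real T) * (\<Sum>t=1..T. (norm (grad (x t) - v t))\<^sup>2))"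
    using mean_le_sqrt_mean_squares[of "{1..T}" "\<lambda>t. norm (grad (x t) - v t)"] by simp
  also have "9/4 * \<eta> * L * d \<le> 4 * \<eta> * L * d"
    using eta lipschitz_constant_nonneg[OF smooth] by (intro mult_right_mono) (auto simp: d_def)
  finally show ?thesis
    unfolding d_def by simp
qed

end

theorem mainTheorem2:
  fixes f :: "real ^ 'n \<Rightarrow> real"
    and grad :: "real ^ 'n \<Rightarrow> real ^ 'n"
    and L \<eta> lam \<Delta> :: real
    and T :: nat
    and M :: "'w measure"
    and x1 :: "real ^ 'n"
    and v :: "'w \<Rightarrow> nat \<Rightarrow> real ^ 'n"
    and x :: "'w \<Rightarrow> nat \<Rightarrow> real ^ 'n"
  assumes grad: "\<And>y. (f has_derivative (\<lambda>h. grad y \<bullet> h)) (at y)"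
    and smooth: "\<And>y z. norm (grad y - grad z) \<le> L * norm (y - z)"
    and bdd: "bdd_below (range f)"
    and T: "T \<ge> 1"
    and eta: "\<eta> > 0"
    and lam: "0 \<le> lam" "lam \<le> 1 / (2 * \<eta> * real T)"
    and x1_inf: "norm_inf x1 \<le> \<eta>"
    and x1_gap: "f x1 - (INF y. f y) \<le> \<Delta>"
    and P: "prob_space M"
    and v_meas: "\<And>t. (\<lambda>\<omega>. v \<omega> t) \<in> borel_measurable M"
    and x_init: "\<And>\<omega>. x \<omega> 1 = x1"
    and x_step: "\<And>\<omega> t. 1 \<le> t \<Longrightarrow> t \<le> T \<Longrightarrow>
                   x \<omega> (Suc t) = x \<omega> t - \<eta> *\<^sub>R (vsign (v \<omega> t) + lam *\<^sub>R x \<omega> t)"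
    and err_int: "integrable M (\<lambda>\<omega>. (1 / real T) * (\<Sum>t=1..T. (norm (grad (x \<omega> t) - v \<omega> t))\<^sup>2))"
  shows "(\<integral>\<omega>. (1 / real T) * (\<Sum>t=1..T. norm1 (grad (x \<omega> t))) \<partial>M)
           \<le> 2 * \<Delta> / (\<eta> * real T)
             + 4 * sqrt (real CARD('n))
                 * sqrt (\<integral>\<omega>. (1 / real T) * (\<Sum>t=1..T. (norm (grad (x \<omega> t) - v \<omega> t))\<^sup>2) \<partial>M)
             + 4 * \<eta> * L * real CARD('n)"
proof -
  interpret prob_space M
    by (rule P)
  define Z where "Z \<omega> = (1 / real T) * (\<Sum>t=1..T. (norm (grad (x \<omega> t) - v \<omega> t))\<^sup>2)" for \<omega>
  define C where "C = 2 * \<Delta> / (\<eta> * real T) + 4 * \<eta> * L * real CARD('n)"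
  have Z_nonneg: "0 \<le> Z \<omega>" for \<omega>
    unfolding Z_def by (simp add: sum_nonneg)
  have Z_int: "integrable M Z"
    using err_int unfolding Z_def .
  note sqrt_Z = expectation_sqrt_le_sqrt_expectation[OF Z_int AE_I2[OF Z_nonneg]]
  have C_nonneg: "0 \<le> C"
    using x1_gap cINF_lower[OF bdd, of x1] eta T lipschitz_constant_nonneg[OF smooth]
    by (simp add: C_def)
  have pathwise: "(1 / real T) * (\<Sum>t=1..T. norm1 (grad (x \<omega> t))) \<le> C + 4 * sqrt (real CARD('n)) * sqrt (Z \<omega>)"
    for \<omega>
  proof -
    have "(1 / real T) * (\<Sum>t=1..T. norm1 (grad (x \<omega> t)))
          \<le> 2 * \<Delta> / (\<eta> * real T) + 4 * sqrt (real CARD('n)) * sqrt (Z \<omega>) + 4 * \<eta> * L * real CARD('n)"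
      unfolding Z_def
      by (rule signSGD_pathwise_bound[OF grad smooth bdd T eta lam, where x = "x \<omega>" and v = "v \<omega>"])
        (use x_init x1_inf x1_gap x_step in auto)
    then show ?thesis
      unfolding C_def by linarith
  qed
  have "(\<integral>\<omega>. (1 / real T) * (\<Sum>t=1..T. norm1 (grad (x \<omega> t))) \<partial>M)
        \<le> (\<integral>\<omega>. C + 4 * sqrt (real CARD('n)) * sqrt (Z \<omega>) \<partial>M)"
    using pathwise sqrt_Z(1) C_nonneg Z_nonneg by (intro integral_mono_AE') auto
  also have "\<dots> = C + 4 * sqrt (real CARD('n)) * (\<integral>\<omega>. sqrt (Z \<omega>) \<partial>M)"
    using sqrt_Z(1) by (simp add: prob_space)
  also have "\<dots> \<le> C + 4 * sqrt (real CARD('n)) * sqrt (\<integral>\<omega>. Z \<omega> \<partial>M)"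
    using sqrt_Z(2) by (intro add_left_mono mult_left_mono) auto
  finally show ?thesis
    by (simp add: C_def Z_def)
qed

end
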